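(* Let $\eta\in\partial A_*$ and let $z\in\Lambda$ be such that $c_z(\eta)=1$ and $\eta^z\notin A_*$. Let $I=[a,b]\subseteq\{0,1,\dots,L\}$ be an integer interval containing $z$ and $z-1$, let $\ell=b-a$, $I_-=(a-\ell,a)\cap\{0,\dots,L\}$, $I_+=(b,b+\ell]\cap\{0,\dots,L\}$. Then either $I=\{0,1,\dots,L\}$, or $\eta$ (with the convention $\eta_0=0$) has at least one zero in $I_-\cup I_+$.
   Context: Fix $q\in(0,1/2)$, $\Lambda=\{1,\dots,L\}$, $\Omega_\Lambda=\{0,1\}^\Lambda$. East constraints: $c_1\equiv1$, $c_x(\sigma)=1-\sigma_{x-1}$ for $x\ge2$; $\eta^x$ is $\eta$ with the spin at $x$ flipped. Deterministic dynamics: set $\eta_0:=0$. The gap at $x$ is $g_x(\eta)=\min\{d>0:\eta_{x-d}=0\}$. For $(d,x)\in\{1,\dots,L\}^2$, $\phi_{d,x}(\eta)$ sets $\eta_x=1$ if $\eta_x=0$ and $g_x(\eta)=d$, otherwise leaves $\eta$ unchanged. Order $\{1,\dots,L\}^2$ by $(d_1,x_1)\prec(d_2,x_2)$ iff $d_1<d_2$, or $d_1=d_2$ and $x_1>x_2$; list it as $\alpha_1\prec\dots\prec\alpha_{L^2}$, set $\eta[0]=\eta$, $\eta[k]=\phi_{\alpha_k}(\eta[k-1])$, and write $\Phi(\eta;d,x)=\eta[k]$ when $\alpha_k=(d,x)$. $A_*=\{\eta:\Phi(\eta;L-1,1)=\mathbb 10\}$, with $\mathbb 10$ having $\sigma_x=1$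 for $x<L$, $\sigma_L=0$. $\partial A_*=\{\eta\in A_*:\exists\,x\in\Lambda$ with $c_x(\eta)=1$ and $\eta^x\notin A_*\}$. *)

theory Defs
  imports Main
begin

text \<open>Configurations on Lambda = {1..L}, encoded as nat => bool (True = spin 1),
  vanishing outside {1..L}; in particular eta 0 = False (the convention eta_0 = 0).\<close>
definition Omega :: "nat \<Rightarrow> (nat \<Rightarrow> bool) set" where
  "Omega L = {\<eta>. \<forall>x. x \<notin> {1..L} \<longrightarrow> \<not> \<eta> x}"

definition flip :: "(nat \<Rightarrow> bool) \<Rightarrow> nat \<Rightarrow> (nat \<Rightarrow> bool)" where
  "flip \<eta> x = \<eta>(x := \<not> \<eta> x)"

definition constr :: "nat \<Rightarrow> (nat \<Rightarrow> bool) \<Rightarrow> bool" where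
  "constr x \<eta> = (x = 1 \<or> \<not> \<eta> (x - 1))"

definition gap :: "(nat \<Rightarrow> bool) \<Rightarrow> nat \<Rightarrow> nat" where
  "gap \<eta> x = (LEAST d. 0 < d \<and> \<not> \<eta> (x - d))"

definition phi :: "nat \<Rightarrow> nat \<Rightarrow> (nat \<Rightarrow> bool) \<Rightarrow> (nat \<Rightarrow> bool)" where
  "phi d x \<eta> = (if \<not> \<eta> x \<and> gap \<eta> x = d then \<eta>(x := True) else \<eta>)"

definition prec_eq :: "nat \<times> nat \<Rightarrow> nat \<times> nat \<Rightarrow> bool" where
  "prec_eq a b = (fst a < fst b \<or> (fst a = fst b \<and> snd a \<ge> snd b))"

text \<open>The list alpha_1 < ... < alpha_{L^2} of {1..L}^2 in increasing order.\<close>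
definition alphas :: "nat \<Rightarrow> (nat \<times> nat) list" where
  "alphas L = concat (map (\<lambda>d. map (\<lambda>x. (d, x)) (rev [1..<L+1])) [1..<L+1])"

text \<open>Phi(eta; d, x) = eta[k] where alpha_k = (d,x): apply phi_{alpha_1}, ..., phi_{alpha_k}.\<close>
definition Phi :: "nat \<Rightarrow> (nat \<Rightarrow> bool) \<Rightarrow> nat \<Rightarrow> nat \<Rightarrow> (nat \<Rightarrow> bool)" where
  "Phi L \<eta> d x = fold (\<lambda>\<alpha> \<sigma>. phi (fst \<alpha>) (snd \<alpha>) \<sigma>)
      (filter (\<lambda>\<alpha>. prec_eq \<alpha> (d, x)) (alphas L)) \<eta>"

definition one_zero :: "nat \<Rightarrow> (nat \<Rightarrow> bool)" where
  "one_zero L = (\<lambda>x. 1 \<le> x \<and> x < L)"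

definition Astar :: "nat \<Rightarrow> (nat \<Rightarrow> bool) set" where
  "Astar L = {\<eta> \<in> Omega L. Phi L \<eta> (L - 1) 1 = one_zero L}"

definition boundaryAstar :: "nat \<Rightarrow> (nat \<Rightarrow> bool) set" where
  "boundaryAstar L = {\<eta> \<in> Astar L. \<exists>x \<in> {1..L}. constr x \<eta> \<and> flip \<eta> x \<notin> Astar L}"

end

theory Submission
  imports Defs
begin

(* For d = 1, ..., L the row phi_{(d,L)}, ..., phi_{(d,1)} of the sequence acts
   as one simultaneous "stage" S_d filling every empty site of {1..L} whose gap equals d:
   sites are processed from right to left and the gap only looks to the left, so each gap is
   read from the configuration before the stage.  Hence Phi(eta; L-1, 1) is the configuration
   after the stages S_1, ..., S_{L-1} (Phi_eq_stages).
   Stage d decides site y from the window [y-d, y] alone (stage_local), and a site still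
   empty after k stages has k occupied sites on its left (stages_empty_sees_occupied).
   Consequently, with l = b - a, the flip at z cannot be seen during the first l stages:
   sites left of z never look at z (stages_agree_below), sites right of b only look into
   (b, b+l], which is occupied when I_+ has no zero (stages_agree_above), and [z, b] is
   completely filled after l stages in both configurations, because the leftmost zero in I
   is shielded by the occupied interval I_- (filled_behind_shielded_zero).  So eta and eta^z
   agree after l stages, hence after L-1 stages, and eta^z would lie in A_*. *)

lemma gap_eq_iff:
  assumes "\<not> \<sigma> 0"
  shows "(gap \<sigma> y = d) = (0 < d \<and> \<not> \<sigma> (y - d) \<and> (\<forall>j. 0 < j \<and> j < d \<longrightarrow> \<sigma> (y - j)))"
proof -
  let ?P = "\<lambda>d. 0 < d \<and> \<not> \<sigma> (y - d)"
  have ex: "?P (Suc y)" using assms by simp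
  show ?thesis
  proof
    assume g: "gap \<sigma> y = d"
    have "?P (Least ?P)" using LeastI[of ?P, OF ex] .
    moreover have "\<forall>j. j < Least ?P \<longrightarrow> \<not> ?P j" using not_less_Least by blast
    ultimately show "0 < d \<and> \<not> \<sigma> (y - d) \<and> (\<forall>j. 0 < j \<and> j < d \<longrightarrow> \<sigma> (y - j))"
      using g unfolding gap_def by auto
  next
    assume h: "0 < d \<and> \<not> \<sigma> (y - d) \<and> (\<forall>j. 0 < j \<and> j < d \<longrightarrow> \<sigma> (y - j))"
    show "gap \<sigma> y = d" unfolding gap_def
      by (rule Least_equality) (use h in \<open>auto simp: not_less[symmetric]\<close>)
  qed
qed

lemma gap_local:
  assumes "\<forall>i<y. \<sigma> i = \<tau> i" "0 < y"
  shows "gap \<sigma> y = gap \<tau> y"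
proof -
  have "(\<lambda>d. 0 < d \<and> \<not> \<sigma> (y - d)) = (\<lambda>d. 0 < d \<and> \<not> \<tau> (y - d))"
    using assms by auto
  then show ?thesis unfolding gap_def by simp
qed

section \<open>Phi as a sequence of simultaneous stages\<close>

definition stage :: "nat \<Rightarrow> nat \<Rightarrow> (nat \<Rightarrow> bool) \<Rightarrow> (nat \<Rightarrow> bool)" where
  "stage L d \<sigma> = (\<lambda>y. if 1 \<le> y \<and> y \<le> L then \<sigma> y \<or> gap \<sigma> y = d else \<sigma> y)"

primrec stages :: "nat \<Rightarrow> (nat \<Rightarrow> bool) \<Rightarrow> nat \<Rightarrow> (nat \<Rightarrow> bool)" where
  "stages L \<sigma> 0 = \<sigma>"
| "stages L \<sigma> (Suc k) = stage L (Suc k) (stages L \<sigma> k)"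

lemma phi_upd: "phi d x \<sigma> = \<sigma>(x := (\<sigma> x \<or> gap \<sigma> x = d))"
  unfolding phi_def by (rule ext) (auto simp: fun_upd_def)

text \<open>Applying phi_d to positive sites in decreasing order uses only the original gaps,
  since every later site lies to the left of the sites already changed.\<close>
lemma fold_phi_decreasing:
  "sorted_wrt (>) xs \<Longrightarrow> (\<forall>x\<in>set xs. 0 < x) \<Longrightarrow>
   fold (\<lambda>x \<sigma>. phi d x \<sigma>) xs \<sigma> = (\<lambda>y. if y \<in> set xs then \<sigma> y \<or> gap \<sigma> y = d else \<sigma> y)"
proof (induction xs arbitrary: \<sigma>)
  case Nil
  then show ?case by simp
next
  case (Cons x xs)
  let ?s = "\<sigma>(x := (\<sigma> x \<or> gap \<sigma> x = d))"
  have IH: "fold (\<lambda>x \<sigma>. phi d x \<sigma>) xs ?s = (\<lambda>y. if y \<in> set xs then ?s y \<or> gap ?s y = d else ?s y)"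
    by (rule Cons.IH) (use Cons.prems in auto)
  have unfold: "fold (\<lambda>x \<sigma>. phi d x \<sigma>) (x # xs) \<sigma> = fold (\<lambda>x \<sigma>. phi d x \<sigma>) xs ?s"
    by (simp add: phi_upd)
  have "\<And>y. y \<in> set xs \<Longrightarrow> gap ?s y = gap \<sigma> y"
    by (rule gap_local) (use Cons.prems in auto)
  moreover have "\<And>y. y \<in> set xs \<Longrightarrow> y \<noteq> x" using Cons.prems by auto
  ultimately show ?case unfolding unfold IH by (auto simp: phi_upd)
qed

lemma fold_phi_row: "fold (\<lambda>x \<sigma>. phi d x \<sigma>) (rev [1..<L+1]) \<sigma> = stage L d \<sigma>"
proof -
  have "sorted_wrt (>) (rev [1..<L+1])"
    by (simp only: sorted_wrt_rev sorted_wrt_upt)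
  then show ?thesis by (subst fold_phi_decreasing) (auto simp: stage_def)
qed

lemma fold_concat: "fold f (concat xss) s = fold (\<lambda>xs. fold f xs) xss s"
  by (induction xss arbitrary: s) auto

lemma fold_stage_eq_stages: "fold (stage L) [1..<k+1] \<sigma> = stages L \<sigma> k"
  by (induction k) auto

text \<open>The pairs preceding (L-1,1) are exactly the rows d = 1, ..., L-1.\<close>
lemma Phi_eq_stages:
  assumes "2 \<le> L"
  shows "Phi L \<eta> (L - 1) 1 = stages L \<eta> (L - 1)"
proof -
  define row where "row d = map (\<lambda>x. (d, x)) (rev [1..<L+1])" for d :: nat
  define P where "P = (\<lambda>\<alpha>. prec_eq \<alpha> (L - 1, 1))"
  have alphas: "alphas L = concat (map row [1..<L+1])" unfolding alphas_def row_def by simp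
  have split: "[1..<L+1] = [1..<L] @ [L]" using assms by simp
  have last_row: "filter P (row L) = []" unfolding row_def P_def prec_eq_def using assms
    by (auto simp: filter_empty_conv)
  have other_rows: "map (filter P \<circ> row) [1..<L] = map row [1..<L]"
    by (rule map_cong) (auto simp: row_def P_def prec_eq_def intro!: filter_True)
  have "filter P (alphas L) = concat (map row [1..<L])"
    unfolding alphas filter_concat split map_append map_map other_rows using last_row by simp
  then have "Phi L \<eta> (L - 1) 1 = fold (\<lambda>xs. fold (\<lambda>\<alpha> \<sigma>. phi (fst \<alpha>) (snd \<alpha>) \<sigma>) xs) (map row [1..<L]) \<eta>"
    unfolding Phi_def P_def by (simp add: fold_concat)
  also have "\<dots> = fold (stage L) [1..<L] \<eta>"
    unfolding fold_map
    by (rule fold_cong) (auto simp: row_def fold_map comp_def fold_phi_row[symmetric])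
  also have "\<dots> = stages L \<eta> (L - 1)" using fold_stage_eq_stages[of L "L - 1" \<eta>] assms by simp
  finally show ?thesis .
qed

lemma stages_zero: "\<not> \<sigma> 0 \<Longrightarrow> \<not> stages L \<sigma> k 0"
  by (induction k) (auto simp: stage_def)

lemma stage_mono: "\<sigma> y \<Longrightarrow> stage L d \<sigma> y"
  by (auto simp: stage_def)

lemma stages_mono: "\<sigma> y \<Longrightarrow> stages L \<sigma> k y"
  by (induction k) (auto simp: stage_mono)

lemma stage_local:
  assumes "\<not> \<sigma> 0" "\<not> \<tau> 0" "\<forall>i. y - d \<le> i \<and> i \<le> y \<longrightarrow> \<sigma> i = \<tau> i"
  shows "stage L d \<sigma> y = stage L d \<tau> y"
proof -
  have window: "\<forall>j. j \<le> d \<longrightarrow> \<sigma> (y - j) = \<tau> (y - j)"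
    using assms(3) by (auto intro: diff_le_mono2)
  have "\<sigma> y = \<tau> y" using assms(3) by simp
  moreover have "(gap \<sigma> y = d) = (gap \<tau> y = d)"
    using window by (simp add: gap_eq_iff[of \<sigma>, OF assms(1)] gap_eq_iff[of \<tau>, OF assms(2)])
  ultimately show ?thesis by (simp add: stage_def)
qed

text \<open>A site of {1..L} still empty after k stages has its k left neighbours occupied:
  otherwise its gap would have been some d \<le> k and stage d would have filled it.\<close>
lemma stages_empty_sees_occupied:
  "\<not> \<sigma> 0 \<Longrightarrow> 1 \<le> y \<Longrightarrow> y \<le> L \<Longrightarrow> \<not> stages L \<sigma> k y \<Longrightarrow> 0 < j \<Longrightarrow> j \<le> k \<Longrightarrow>
   stages L \<sigma> k (y - j)"
proof (induction k arbitrary: j)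
  case 0
  then show ?case by simp
next
  case (Suc k)
  let ?t = "stages L \<sigma> k"
  have empty: "\<not> ?t y" and gap_ne: "gap ?t y \<noteq> Suc k" using Suc.prems by (auto simp: stage_def)
  have IH: "\<And>j. 0 < j \<Longrightarrow> j \<le> k \<Longrightarrow> ?t (y - j)" using Suc.IH Suc.prems empty by blast
  show ?case
  proof (cases "j \<le> k")
    case True
    then show ?thesis using IH Suc.prems by (auto intro: stage_mono)
  next
    case False
    then have j: "j = Suc k" using Suc.prems by simp
    show ?thesis
    proof (cases "?t (y - Suc k)")
      case True
      then show ?thesis using j by (auto intro: stage_mono)
    next
      case False
      then have "gap ?t y = Suc k"
        using IH stages_zero[of \<sigma>, OF Suc.prems(1)] by (subst gap_eq_iff) auto
      then show ?thesis using gap_ne by simp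
    qed
  qed
qed

lemma stages_agree_later:
  assumes "stages L \<sigma> k = stages L \<tau> k" "k \<le> n"
  shows "stages L \<sigma> n = stages L \<tau> n"
  using assms(2) by (induction n rule: dec_induct) (use assms(1) in auto)

section \<open>Filling behind a shielded empty site\<close>

lemma zero_persists:
  assumes "\<not> \<rho> 0" "\<not> \<rho> w" "\<forall>j. 0 < j \<and> j \<le> m \<longrightarrow> \<rho> (w - j)"
  shows "\<not> stages L \<rho> m w"
  using assms(3)
proof (induction m)
  case 0
  then show ?case using assms(2) by simp
next
  case (Suc m)
  have "stages L \<rho> m (w - Suc m)" using Suc.prems by (auto intro: stages_mono)
  then have "gap (stages L \<rho> m) w \<noteq> Suc m"
    using gap_eq_iff[of "stages L \<rho> m", OF stages_zero[of \<rho>, OF assms(1)]] by blast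
  then show ?case using Suc by (auto simp: stage_def)
qed

text \<open>If w is still empty after m stages, then stage m+1 leaves no empty site of {1..L}
  in (w, w+m+1]: such a site would see m occupied sites and then w, i.e. have gap m+1.\<close>
lemma filled_behind_zero:
  assumes "\<not> \<rho> 0" "\<not> stages L \<rho> m w" "w < y" "y \<le> w + Suc m" "y \<le> L"
  shows "stages L \<rho> (Suc m) y"
proof (cases "stages L \<rho> m y")
  case True
  then show ?thesis by (auto intro: stage_mono)
next
  case False
  have y1: "1 \<le> y" using assms by simp
  have occupied: "\<And>j. 0 < j \<Longrightarrow> j \<le> m \<Longrightarrow> stages L \<rho> m (y - j)"
    using stages_empty_sees_occupied[OF assms(1) y1 assms(5) False] by blast
  have "y - w = Suc m"
  proof (rule ccontr)
    assume "y - w \<noteq> Suc m"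
    then have "stages L \<rho> m (y - (y - w))" using assms(3,4) by (intro occupied) auto
    then show False using assms(2,3) by simp
  qed
  then have "y - Suc m = w" using assms(3) by simp
  then have "gap (stages L \<rho> m) y = Suc m"
    using assms(2) occupied
    by (subst gap_eq_iff[of "stages L \<rho> m", OF stages_zero[of \<rho>, OF assms(1)]]) auto
  then show ?thesis using y1 assms(5) by (simp add: stage_def)
qed

lemma filled_behind_shielded_zero:
  assumes "\<not> \<rho> 0" "\<not> \<rho> w" "w = 0 \<or> (\<forall>j. 0 < j \<and> j < l \<longrightarrow> \<rho> (w - j))"
    and "0 < l" "w < y" "y \<le> w + l" "y \<le> L"
  shows "stages L \<rho> l y"
proof -
  obtain m where l: "l = Suc m" using assms(4) by (cases l) auto
  have "\<not> stages L \<rho> m w"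
  proof (cases "w = 0")
    case True
    then show ?thesis using stages_zero[of \<rho>, OF assms(1)] by simp
  next
    case False
    then have "\<forall>j. 0 < j \<and> j \<le> m \<longrightarrow> \<rho> (w - j)" using assms(3) l by auto
    then show ?thesis by (rule zero_persists[OF assms(1,2)])
  qed
  then show ?thesis using filled_behind_zero[of \<rho>, OF assms(1)] assms(5-7) l by blast
qed

section \<open>Locality of the flip\<close>

lemma stages_agree_below:
  assumes "\<not> \<sigma> 0" "\<not> \<tau> 0" "\<forall>i<z. \<sigma> i = \<tau> i" "y < z"
  shows "stages L \<sigma> k y = stages L \<tau> k y"
  using assms(4)
proof (induction k arbitrary: y)
  case 0
  then show ?case using assms(3) by simp
next
  case (Suc k)
  then show ?case
    using stage_local[where \<sigma>="stages L \<sigma> k" and \<tau>="stages L \<tau> k",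
          OF stages_zero[of \<sigma>, OF assms(1)] stages_zero[of \<tau>, OF assms(2)]] by simp
qed

text \<open>If two configurations agree right of b and the sites of (b, b+l] \<inter> {1..L} are
  occupied, then they agree right of b during l stages: a site there that is still empty
  lies beyond b+l, so its window does not reach b.\<close>
lemma stages_agree_above:
  assumes "\<not> \<sigma> 0" "\<not> \<tau> 0" "\<forall>i>b. \<sigma> i = \<tau> i"
    and "\<forall>i. b < i \<and> i \<le> b + l \<and> i \<le> L \<longrightarrow> \<sigma> i"
    and "k \<le> l" "b < y"
  shows "stages L \<sigma> k y = stages L \<tau> k y"
  using assms(5,6)
proof (induction k arbitrary: y)
  case 0
  then show ?case using assms(3) by simp
next
  case (Suc k)
  have IH: "\<And>i. b < i \<Longrightarrow> stages L \<sigma> k i = stages L \<tau> k i" using Suc by simp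
  consider "stages L \<sigma> k y" | "L < y" | "\<not> stages L \<sigma> k y" "y \<le> L" using not_le by blast
  then show ?case
  proof cases
    case 1
    then show ?thesis using IH[OF Suc.prems(2)] by (auto intro: stage_mono)
  next
    case 2
    then show ?thesis using IH[OF Suc.prems(2)] by (simp add: stage_def)
  next
    case 3
    then have "\<not> \<sigma> y" using stages_mono by blast
    then have "\<not> y \<le> b + l" using assms(4) 3(2) Suc.prems(2) by blast
    then have "b + l < y" by simp
    then have "\<forall>i. y - Suc k \<le> i \<and> i \<le> y \<longrightarrow> stages L \<sigma> k i = stages L \<tau> k i"
      using IH Suc.prems by auto
    then show ?thesis
      using stage_local[where \<sigma>="stages L \<sigma> k" and \<tau>="stages L \<tau> k",
          OF stages_zero[of \<sigma>, OF assms(1)] stages_zero[of \<tau>, OF assms(2)]] by simp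
  qed
qed

text \<open>The leftmost empty site w \<ge> a is shielded by the occupied sites of (a-l, a) and
  of [a, w).\<close>
lemma leftmost_zero_shielded:
  fixes \<eta> :: "nat \<Rightarrow> bool" and a v l :: nat
  assumes "\<not> \<eta> 0" "a \<le> v" "\<not> \<eta> v" "\<forall>x. x < a \<and> a < x + l \<longrightarrow> \<eta> x"
  obtains w where "a \<le> w" "w \<le> v" "\<not> \<eta> w" "w = 0 \<or> (\<forall>j. 0 < j \<and> j < l \<longrightarrow> \<eta> (w - j))"
proof -
  define w where "w = (LEAST y. a \<le> y \<and> \<not> \<eta> y)"
  have "a \<le> w \<and> \<not> \<eta> w" unfolding w_def by (rule LeastI[of _ v]) (use assms(2,3) in simp)
  then have w: "a \<le> w" "\<not> \<eta> w" by simp_all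
  have "w \<le> v" unfolding w_def by (rule Least_le) (use assms(2,3) in auto)
  have right_of_a: "\<eta> x" if "a \<le> x" "x < w" for x
    using not_less_Least[of x "\<lambda>y. a \<le> y \<and> \<not> \<eta> y"] that unfolding w_def by blast
  have "w = 0 \<or> (\<forall>j. 0 < j \<and> j < l \<longrightarrow> \<eta> (w - j))"
  proof (cases "a = 0")
    case True
    have "w \<le> 0" unfolding w_def by (rule Least_le) (use True assms(1) in simp)
    then show ?thesis by simp
  next
    case False
    have "l \<le> a"
    proof (rule ccontr)
      assume "\<not> l \<le> a"
      then have "\<eta> 0" using assms(4) False by auto
      then show False using assms(1) by simp
    qed
    have "\<eta> (w - j)" if "0 < j" "j < l" for j
    proof (cases "a \<le> w - j")
      case True
      then show ?thesis using right_of_a that w \<open>l \<le> a\<close> by simp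
    next
      case False
      then show ?thesis using assms(4) that w \<open>l \<le> a\<close> by auto
    qed
    then show ?thesis by blast
  qed
  then show ?thesis using that w \<open>w \<le> v\<close> by blast
qed

lemma flip_invisible:
  assumes "\<not> \<eta> 0" "1 \<le> z" "\<not> \<eta> (z - 1)" "a \<le> z - 1" "z \<le> b" "b \<le> L"
    and no_zero_left: "\<forall>x. x < a \<and> a < x + (b - a) \<longrightarrow> \<eta> x"
    and no_zero_right: "\<forall>x. b < x \<and> x \<le> b + (b - a) \<and> x \<le> L \<longrightarrow> \<eta> x"
  shows "stages L \<eta> (b - a) = stages L (flip \<eta> z) (b - a)"
proof
  fix y
  let ?l = "b - a" and ?\<eta>' = "flip \<eta> z"
  have same: "\<And>i. i \<noteq> z \<Longrightarrow> ?\<eta>' i = \<eta> i" by (simp add: flip_def)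
  have "\<not> ?\<eta>' 0" using same assms(1,2) by simp
  obtain w where w: "a \<le> w" "w \<le> z - 1" "\<not> \<eta> w"
      and shield: "w = 0 \<or> (\<forall>j. 0 < j \<and> j < ?l \<longrightarrow> \<eta> (w - j))"
    using leftmost_zero_shielded[OF assms(1,4,3) no_zero_left] by blast
  have left_of_w: "\<And>i. i \<le> w \<Longrightarrow> ?\<eta>' i = \<eta> i" using w(2) assms(2) same by auto
  have shield': "w = 0 \<or> (\<forall>j. 0 < j \<and> j < ?l \<longrightarrow> ?\<eta>' (w - j))"
    using shield left_of_w by simp
  consider "y < z" | "b < y" | "z \<le> y" "y \<le> b" by linarith
  then show "stages L \<eta> ?l y = stages L ?\<eta>' ?l y"
  proof cases
    case 1
    then show ?thesis
      by (intro stages_agree_below[where z = z]) (use assms(1) \<open>\<not> ?\<eta>' 0\<close> same in auto)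
  next
    case 2
    then show ?thesis
      using stages_agree_above[of \<eta> "flip \<eta> z", OF assms(1) \<open>\<not> ?\<eta>' 0\<close> _ no_zero_right]
        same assms(5) by simp
  next
    case 3
    then have y: "0 < ?l" "w < y" "y \<le> w + ?l" "y \<le> L" using w assms(2,4,6) by auto
    have "\<not> ?\<eta>' w" using w(3) left_of_w by simp
    then show ?thesis
      using filled_behind_shielded_zero[of \<eta>, OF assms(1) w(3) shield y]
        filled_behind_shielded_zero[of "flip \<eta> z", OF \<open>\<not> ?\<eta>' 0\<close> _ shield' y] by simp
  qed
qed

theorem mainTheorem15:
  fixes L z a b :: nat and \<eta> :: "nat \<Rightarrow> bool"
  assumes "2 \<le> L"
    and "\<eta> \<in> boundaryAstar L"
    and "z \<in> {1..L}" and "constr z \<eta>" and "flip \<eta> z \<notin> Astar L"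
    and "a \<le> b" and "b \<le> L"
    and "z \<in> {a..b}" and "z - 1 \<in> {a..b}"
  shows "({a..b} = {0..L}) \<or>
         (\<exists>x \<in> {x. int a - int (b - a) < int x \<and> x < a \<and> x \<le> L}
               \<union> {x. b < x \<and> x \<le> b + (b - a) \<and> x \<le> L}. \<not> \<eta> x)"
proof (rule ccontr)
  assume "\<not> ?thesis"
  then have not_all: "{a..b} \<noteq> {0..L}"
    and left: "\<forall>x. x < a \<and> a < x + (b - a) \<longrightarrow> \<eta> x"
    and right: "\<forall>x. b < x \<and> x \<le> b + (b - a) \<and> x \<le> L \<longrightarrow> \<eta> x"
    using assms(7) by auto
  have A: "\<eta> \<in> Astar L" and \<Omega>: "\<eta> \<in> Omega L"
    using assms(2) by (auto simp: boundaryAstar_def Astar_def)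
  then have "\<not> \<eta> 0" by (simp add: Omega_def)
  moreover have "\<not> \<eta> (z - 1)" using assms(4) \<open>\<not> \<eta> 0\<close> by (auto simp: constr_def)
  ultimately have "stages L \<eta> (b - a) = stages L (flip \<eta> z) (b - a)"
    using flip_invisible[OF _ _ _ _ _ assms(7) left right] assms(3,8,9) by auto
  moreover have "b - a \<le> L - 1" using not_all assms(6,7) by auto
  ultimately have "stages L \<eta> (L - 1) = stages L (flip \<eta> z) (L - 1)"
    by (rule stages_agree_later)
  then have "Phi L (flip \<eta> z) (L - 1) 1 = Phi L \<eta> (L - 1) 1"
    using Phi_eq_stages[OF assms(1)] by simp
  also have "\<dots> = one_zero L" using A by (simp add: Astar_def)
  finally have "Phi L (flip \<eta> z) (L - 1) 1 = one_zero L" .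
  moreover have "flip \<eta> z \<in> Omega L" using \<Omega> assms(3) by (auto simp: Omega_def flip_def)
  ultimately show False using assms(5) by (simp add: Astar_def)
qed

end
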